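(* Let $\mathcal{G}=(G,(m,r))$ be a mutant-biased fitness graph. Then the fixation probability is submodular: for all $S,T\subseteq V$, \[ \operatorname{fp}_{\mathcal{G}}(S)+\operatorname{fp}_{\mathcal{G}}(T)\ge\operatorname{fp}_{\mathcal{G}}(S\cup T)+\operatorname{fp}_{\mathcal{G}}(S\cap T). \]
   Context: A fitness graph is $\mathcal{G}=(G,(m,r))$ where $G=(V,E,w)$ is a strongly connected directed graph, $w(u,\cdot)$ is a probability distribution over out-neighbours of $u$, and $r,m\colon V\to(0,\infty)$; it is mutant-biased if $m(u)\ge r(u)$ for all $u$. For a configuration (set of mutants) $X\subseteq V$, $f_X(u)=m(u)$ if $u\in X$, else $r(u)$. The Heterogeneous Moran process starts at $\mathcal{X}_0=S$; from $\mathcal{X}_t=X$ it picks $u$ with probability $f_X(u)/\sum_v f_X(v)$, then $v$ with probability $w(u,v)$, and $v$ takes the type of $u$. $\operatorname{fp}_{\mathcal{G}}(S)$ is the probability that the process eventually reaches $V$ (with $\operatorname{fp}_{\mathcal{G}}(\emptyset)=0$). *)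

theory Defs
  imports Complex_Main
begin

definition fitness_graph ::
  "'a set \<Rightarrow> ('a \<times> 'a) set \<Rightarrow> ('a \<Rightarrow> 'a \<Rightarrow> real) \<Rightarrow> ('a \<Rightarrow> real) \<Rightarrow> ('a \<Rightarrow> real) \<Rightarrow> bool"
where
  "fitness_graph V E w m r \<longleftrightarrow>
     finite V \<and> V \<noteq> {} \<and> E \<subseteq> V \<times> V \<and>
     (\<forall>u\<in>V. \<forall>v\<in>V. (u, v) \<in> E\<^sup>*) \<and>
     (\<forall>u\<in>V. \<forall>v\<in>V. ((u, v) \<in> E \<longrightarrow> w u v > 0) \<and> ((u, v) \<notin> E \<longrightarrow> w u v = 0)) \<and>
     (\<forall>u\<in>V. (\<Sum>v\<in>V. w u v) = 1) \<and>
     (\<forall>u\<in>V. r u > 0 \<and> m u > 0)"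

definition mutant_biased :: "'a set \<Rightarrow> ('a \<Rightarrow> real) \<Rightarrow> ('a \<Rightarrow> real) \<Rightarrow> bool" where
  "mutant_biased V m r \<longleftrightarrow> (\<forall>u\<in>V. m u \<ge> r u)"

definition fit :: "('a \<Rightarrow> real) \<Rightarrow> ('a \<Rightarrow> real) \<Rightarrow> 'a set \<Rightarrow> 'a \<Rightarrow> real" where
  "fit m r X u = (if u \<in> X then m u else r u)"

definition moran_step ::
  "'a set \<Rightarrow> ('a \<Rightarrow> 'a \<Rightarrow> real) \<Rightarrow> ('a \<Rightarrow> real) \<Rightarrow> ('a \<Rightarrow> real) \<Rightarrow> ('a set \<Rightarrow> real) \<Rightarrow> 'a set \<Rightarrow> real"
where
  "moran_step V w m r h X =
     (\<Sum>u\<in>V. \<Sum>v\<in>V. (fit m r X u / (\<Sum>x\<in>V. fit m r X x)) * w u v *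
        h (if u \<in> X then insert v X else X - {v}))"

text \<open>Probability that the process started at X has reached V within n steps
  (V is absorbing, so this is the probability of being in V at time n).\<close>
fun reach_prob ::
  "'a set \<Rightarrow> ('a \<Rightarrow> 'a \<Rightarrow> real) \<Rightarrow> ('a \<Rightarrow> real) \<Rightarrow> ('a \<Rightarrow> real) \<Rightarrow> nat \<Rightarrow> 'a set \<Rightarrow> real"
where
  "reach_prob V w m r 0 X = (if X = V then 1 else 0)"
| "reach_prob V w m r (Suc n) X =
     (if X = V then 1 else moran_step V w m r (reach_prob V w m r n) X)"

definition fp ::
  "'a set \<Rightarrow> ('a \<Rightarrow> 'a \<Rightarrow> real) \<Rightarrow> ('a \<Rightarrow> real) \<Rightarrow> ('a \<Rightarrow> real) \<Rightarrow> 'a set \<Rightarrow> real"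
where
  "fp V w m r S = (if S = {} then 0 else (SUP n. reach_prob V w m r n S))"

end

theory Submission
  imports Defs
begin

(* Uniformise the process at total rate \<Sum>u. m u: each u fires onto v with weight w u v,
   at rate r u as an ordinary Moran step and at the extra rate m u - r u (nonnegative by
   mutant bias) as a step that only takes effect when u is a mutant.  The fixation probability
   is harmonic for this uniformised step.  Both kinds of step commute with unions; the ordinary
   one also commutes with intersections, while the mutant-only one maps an intersection into
   the intersection of the images.  Running the processes from X and Y with the same steps,
   the submodularity defect fp (X \<union> Y) + fp (X \<inter> Y) - fp X - fp Y therefore becomes
   subharmonic as a function of the pair once fp is known to be monotone, which follows in the
   same way.  A discrete maximum principle concludes: by strong connectivity some edge leaves
   a non-absorbed X, a maximum propagates along it, and so it is attained where X = {} or
   X = V, where the defect vanishes. *)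

definition reproduce :: "'a \<Rightarrow> 'a \<Rightarrow> 'a set \<Rightarrow> 'a set" where
  "reproduce u v X = (if u \<in> X then insert v X else X - {v})"

definition mutant_reproduce :: "'a \<Rightarrow> 'a \<Rightarrow> 'a set \<Rightarrow> 'a set" where
  "mutant_reproduce u v X = (if u \<in> X then insert v X else X)"

lemma reproduce_subset: "X \<subseteq> V \<Longrightarrow> v \<in> V \<Longrightarrow> reproduce u v X \<subseteq> V"
  by (auto simp: reproduce_def)

lemma mutant_reproduce_subset: "X \<subseteq> V \<Longrightarrow> v \<in> V \<Longrightarrow> mutant_reproduce u v X \<subseteq> V"
  by (auto simp: mutant_reproduce_def)

lemma reproduce_mono: "X \<subseteq> Y \<Longrightarrow> reproduce u v X \<subseteq> reproduce u v Y"
  by (auto simp: reproduce_def)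

lemma mutant_reproduce_mono: "X \<subseteq> Y \<Longrightarrow> mutant_reproduce u v X \<subseteq> mutant_reproduce u v Y"
  by (auto simp: mutant_reproduce_def)

lemma reproduce_Un: "reproduce u v (X \<union> Y) = reproduce u v X \<union> reproduce u v Y"
  by (auto simp: reproduce_def)

lemma reproduce_Int: "reproduce u v (X \<inter> Y) = reproduce u v X \<inter> reproduce u v Y"
  by (auto simp: reproduce_def)

lemma mutant_reproduce_Un:
  "mutant_reproduce u v (X \<union> Y) = mutant_reproduce u v X \<union> mutant_reproduce u v Y"
  by (auto simp: mutant_reproduce_def)

lemma mutant_reproduce_Int_subset:
  "mutant_reproduce u v (X \<inter> Y) \<subseteq> mutant_reproduce u v X \<inter> mutant_reproduce u v Y"
  by (auto simp: mutant_reproduce_def)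

lemma rtrancl_exits_set:
  assumes "(x, y) \<in> E\<^sup>*" "x \<in> S" "y \<notin> S"
  obtains u v where "(u, v) \<in> E" "u \<in> S" "v \<notin> S"
  using assms by (induction rule: rtrancl_induct) auto

lemma fp_empty: "fp V w m r {} = 0"
  unfolding fp_def by simp

locale moran_graph =
  fixes V :: "'a set" and E :: "('a \<times> 'a) set" and w :: "'a \<Rightarrow> 'a \<Rightarrow> real"
    and m r :: "'a \<Rightarrow> real"
  assumes fitness_graph: "fitness_graph V E w m r"
begin

abbreviation fix_prob :: "'a set \<Rightarrow> real" where
  "fix_prob \<equiv> fp V w m r"

lemma finite_V: "finite V"
  using fitness_graph by (simp add: fitness_graph_def)

lemma V_nonempty: "V \<noteq> {}"
  using fitness_graph by (simp add: fitness_graph_def)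

lemma weight_nonneg: "u \<in> V \<Longrightarrow> v \<in> V \<Longrightarrow> 0 \<le> w u v"
  using fitness_graph unfolding fitness_graph_def by (metis order_le_less)

lemma weight_pos: "(u, v) \<in> E \<Longrightarrow> 0 < w u v"
  using fitness_graph unfolding fitness_graph_def by blast

lemma weight_sum: "u \<in> V \<Longrightarrow> (\<Sum>v\<in>V. w u v) = 1"
  using fitness_graph by (simp add: fitness_graph_def)

lemma sum_weight_mult: "u \<in> V \<Longrightarrow> (\<Sum>v\<in>V. w u v * c) = c"
  by (simp add: weight_sum flip: sum_distrib_right)

lemma r_pos: "u \<in> V \<Longrightarrow> 0 < r u"
  using fitness_graph by (simp add: fitness_graph_def)

lemma fit_pos: "u \<in> V \<Longrightarrow> 0 < fit m r X u"
  using fitness_graph by (simp add: fitness_graph_def fit_def)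

lemma sum_fit_pos: "0 < (\<Sum>u\<in>V. fit m r X u)"
  using finite_V V_nonempty fit_pos by (simp add: sum_pos)

lemma exists_edge_leaving:
  assumes "X \<subseteq> V" "X \<noteq> {}" "X \<noteq> V"
  obtains u v where "(u, v) \<in> E" "u \<in> X" "v \<in> V" "v \<notin> X"
proof -
  obtain x y where "x \<in> X" "y \<in> V" "y \<notin> X"
    using assms by blast
  moreover have "(x, y) \<in> E\<^sup>*"
    using fitness_graph \<open>x \<in> X\<close> \<open>y \<in> V\<close> assms(1) by (auto simp: fitness_graph_def)
  ultimately obtain u v where "(u, v) \<in> E" "u \<in> X" "v \<notin> X"
    by (metis rtrancl_exits_set)
  moreover have "v \<in> V"
    using fitness_graph \<open>(u, v) \<in> E\<close> by (auto simp: fitness_graph_def)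
  ultimately show thesis
    using that by blast
qed

lemma sum_fit_mult_moran_step:
  "(\<Sum>u\<in>V. fit m r X u) * moran_step V w m r h X
     = (\<Sum>u\<in>V. \<Sum>v\<in>V. fit m r X u * w u v * h (reproduce u v X))"
  using sum_fit_pos[of X]
  by (simp add: moran_step_def reproduce_def sum_distrib_left)

lemma moran_step_mono:
  assumes "\<And>Y. h Y \<le> g Y"
  shows "moran_step V w m r h X \<le> moran_step V w m r g X"
  unfolding moran_step_def
  using fit_pos sum_fit_pos weight_nonneg
  by (intro sum_mono mult_left_mono assms) (simp add: less_imp_le)

lemma moran_step_const: "moran_step V w m r (\<lambda>_. c) X = c"
proof -
  have "(\<Sum>u\<in>V. fit m r X u) * moran_step V w m r (\<lambda>_. c) X
      = (\<Sum>u\<in>V. fit m r X u * (\<Sum>v\<in>V. w u v * c))"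
    by (simp add: sum_fit_mult_moran_step sum_distrib_left mult.assoc)
  also have "\<dots> = (\<Sum>u\<in>V. fit m r X u) * c"
    by (simp add: sum_weight_mult sum_distrib_right)
  finally show ?thesis
    using sum_fit_pos[of X] by simp
qed

lemma moran_step_absorbing: "moran_step V w m r h V = h V"
proof -
  have "moran_step V w m r h V = moran_step V w m r (\<lambda>_. h V) V"
    unfolding moran_step_def by (intro sum.cong refl) (simp add: insert_absorb)
  then show ?thesis
    by (simp add: moran_step_const)
qed

lemma reach_prob_bounds: "0 \<le> reach_prob V w m r n X \<and> reach_prob V w m r n X \<le> 1"
proof (induction n arbitrary: X)
  case 0
  then show ?case by simp
next
  case (Suc n)
  have "moran_step V w m r (\<lambda>_. 0) X \<le> moran_step V w m r (reach_prob V w m r n) X"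
    "moran_step V w m r (reach_prob V w m r n) X \<le> moran_step V w m r (\<lambda>_. 1) X"
    using Suc by (auto intro: moran_step_mono)
  then show ?case
    by (simp add: moran_step_const)
qed

lemma incseq_reach_prob: "incseq (\<lambda>n. reach_prob V w m r n X)"
proof -
  have "reach_prob V w m r n X \<le> reach_prob V w m r (Suc n) X" for n
  proof (induction n arbitrary: X)
    case 0
    show ?case
      using moran_step_mono[of "\<lambda>_. 0" "reach_prob V w m r 0" X] by (simp add: moran_step_const)
  next
    case (Suc n)
    then show ?case
      by (simp add: moran_step_mono)
  qed
  then show ?thesis
    by (rule incseq_SucI)
qed

lemma reach_prob_empty: "reach_prob V w m r n {} = 0"
  using V_nonempty by (induction n) (simp_all add: moran_step_def)

lemma reach_prob_tendsto_fp: "(\<lambda>n. reach_prob V w m r n X) \<longlonglongrightarrow> fix_prob X"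
proof (cases "X = {}")
  case True
  then show ?thesis
    by (simp add: reach_prob_empty fp_def)
next
  case False
  have "(\<lambda>n. reach_prob V w m r n X) \<longlonglongrightarrow> (SUP n. reach_prob V w m r n X)"
    using reach_prob_bounds incseq_reach_prob
    by (intro LIMSEQ_incseq_SUP bdd_aboveI[of _ 1]) auto
  then show ?thesis
    using False by (simp add: fp_def)
qed

lemma fp_nonneg: "0 \<le> fix_prob X"
  using reach_prob_tendsto_fp reach_prob_bounds by (meson LIMSEQ_le_const)

lemma fp_moran_step:
  assumes "X \<subseteq> V"
  shows "moran_step V w m r fix_prob X = fix_prob X"
proof (cases "X = V")
  case True
  then show ?thesis
    by (simp add: moran_step_absorbing)
next
  case False
  have "(\<lambda>n. reach_prob V w m r (Suc n) X) \<longlonglongrightarrow> moran_step V w m r fix_prob X"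
    unfolding reach_prob.simps if_not_P[OF False] moran_step_def
    by (intro tendsto_sum tendsto_mult tendsto_const reach_prob_tendsto_fp)
  moreover have "(\<lambda>n. reach_prob V w m r (Suc n) X) \<longlonglongrightarrow> fix_prob X"
    using reach_prob_tendsto_fp by (rule LIMSEQ_Suc)
  ultimately show ?thesis
    by (rule LIMSEQ_unique)
qed

definition uniformized_step :: "('a set \<Rightarrow> real) \<Rightarrow> 'a set \<Rightarrow> real" where
  "uniformized_step h X = (\<Sum>u\<in>V. \<Sum>v\<in>V. w u v *
     (r u * h (reproduce u v X) + (m u - r u) * h (mutant_reproduce u v X)))"

definition coupled_step :: "('a set \<Rightarrow> 'a set \<Rightarrow> real) \<Rightarrow> 'a set \<Rightarrow> 'a set \<Rightarrow> real" where
  "coupled_step \<Phi> X Y = (\<Sum>u\<in>V. \<Sum>v\<in>V. w u v *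
     (r u * \<Phi> (reproduce u v X) (reproduce u v Y)
      + (m u - r u) * \<Phi> (mutant_reproduce u v X) (mutant_reproduce u v Y)))"

lemma uniformized_step_moran_step:
  "uniformized_step h X = (\<Sum>u\<in>V. fit m r X u) * moran_step V w m r h X
     + ((\<Sum>u\<in>V. m u) - (\<Sum>u\<in>V. fit m r X u)) * h X"
proof -
  have "w u v * (r u * h (reproduce u v X) + (m u - r u) * h (mutant_reproduce u v X))
      = fit m r X u * w u v * h (reproduce u v X) + w u v * ((m u - fit m r X u) * h X)" for u v
    by (cases "u \<in> X") (auto simp: reproduce_def mutant_reproduce_def fit_def algebra_simps)
  then have "uniformized_step h X
      = (\<Sum>u\<in>V. \<Sum>v\<in>V. fit m r X u * w u v * h (reproduce u v X))
        + (\<Sum>u\<in>V. \<Sum>v\<in>V. w u v * ((m u - fit m r X u) * h X))"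
    by (simp add: uniformized_step_def sum.distrib)
  also have "(\<Sum>u\<in>V. \<Sum>v\<in>V. w u v * ((m u - fit m r X u) * h X))
      = ((\<Sum>u\<in>V. m u) - (\<Sum>u\<in>V. fit m r X u)) * h X"
    by (simp add: weight_sum sum_subtractf flip: sum_distrib_right)
  finally show ?thesis
    by (simp add: sum_fit_mult_moran_step)
qed

lemma uniformized_step_fp:
  "X \<subseteq> V \<Longrightarrow> uniformized_step fix_prob X = (\<Sum>u\<in>V. m u) * fix_prob X"
  by (simp add: uniformized_step_moran_step fp_moran_step algebra_simps)

lemma coupled_step_diff:
  "coupled_step (\<lambda>X Y. g X - h Y) X Y = uniformized_step g X - uniformized_step h Y"
  unfolding coupled_step_def uniformized_step_def
  by (simp add: algebra_simps flip: sum_subtractf)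

lemma coupled_step_const: "coupled_step (\<lambda>_ _. c) X Y = (\<Sum>u\<in>V. m u) * c"
proof -
  have "coupled_step (\<lambda>_ _. c) X Y = (\<Sum>u\<in>V. \<Sum>v\<in>V. w u v * (m u * c))"
    unfolding coupled_step_def by (intro sum.cong refl) (simp add: algebra_simps)
  then show ?thesis
    by (simp add: sum_weight_mult sum_distrib_right)
qed

end

locale mutant_biased_moran_graph = moran_graph +
  assumes mutant_biased: "mutant_biased V m r"
begin

lemma excess_fitness_nonneg: "u \<in> V \<Longrightarrow> 0 \<le> m u - r u"
  using mutant_biased by (simp add: mutant_biased_def)

context
  fixes R :: "'a set \<Rightarrow> 'a set \<Rightarrow> bool" and \<Phi> :: "'a set \<Rightarrow> 'a set \<Rightarrow> real"
  assumes R_subset: "\<And>X Y. R X Y \<Longrightarrow> X \<subseteq> V \<and> Y \<subseteq> V"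
    and R_reproduce: "\<And>X Y u v. R X Y \<Longrightarrow> u \<in> V \<Longrightarrow> v \<in> V \<Longrightarrow>
      R (reproduce u v X) (reproduce u v Y)"
    and R_mutant_reproduce: "\<And>X Y u v. R X Y \<Longrightarrow> u \<in> V \<Longrightarrow> v \<in> V \<Longrightarrow>
      R (mutant_reproduce u v X) (mutant_reproduce u v Y)"
    and subharmonic: "\<And>X Y. R X Y \<Longrightarrow> X \<noteq> {} \<Longrightarrow> X \<noteq> V \<Longrightarrow>
      (\<Sum>u\<in>V. m u) * \<Phi> X Y \<le> coupled_step \<Phi> X Y"
begin

lemma maximum_propagates:
  assumes le_max: "\<And>X Y. R X Y \<Longrightarrow> \<Phi> X Y \<le> M"
    and "R X Y" and max: "\<Phi> X Y = M"
    and edge: "(u, v) \<in> E" "u \<in> X" "v \<notin> X"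
  shows "\<Phi> (insert v X) (reproduce u v Y) = M"
proof -
  have uv: "u \<in> V" "v \<in> V"
    using fitness_graph edge(1) by (auto simp: fitness_graph_def)
  \<comment> \<open>Equality in the average of terms bounded by M forces the term of the edge to equal M.\<close>
  define t where "t a b = w a b * (r a * \<Phi> (reproduce a b X) (reproduce a b Y)
      + (m a - r a) * \<Phi> (mutant_reproduce a b X) (mutant_reproduce a b Y))" for a b
  define T where "T a b = w a b * (r a * M + (m a - r a) * M)" for a b
  have t_le_T: "t a b \<le> T a b" if "a \<in> V" "b \<in> V" for a b
  proof -
    have "\<Phi> (reproduce a b X) (reproduce a b Y) \<le> M"
      "\<Phi> (mutant_reproduce a b X) (mutant_reproduce a b Y) \<le> M"
      using le_max R_reproduce[OF \<open>R X Y\<close> that] R_mutant_reproduce[OF \<open>R X Y\<close> that] by auto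
    then show ?thesis
      unfolding t_def T_def using weight_nonneg[OF that] r_pos[OF that(1)]
        excess_fitness_nonneg[OF that(1)]
      by (intro mult_left_mono add_mono) auto
  qed
  have "(\<Sum>(a, b)\<in>V \<times> V. T a b) = (\<Sum>u\<in>V. m u) * \<Phi> X Y"
    using coupled_step_const[of M X Y] max
    by (simp add: T_def coupled_step_def sum.cartesian_product)
  also have "\<dots> \<le> (\<Sum>(a, b)\<in>V \<times> V. t a b)"
    using subharmonic[OF \<open>R X Y\<close>] R_subset[OF \<open>R X Y\<close>] edge uv
    by (auto simp: t_def coupled_step_def sum.cartesian_product)
  finally have "(\<Sum>(a, b)\<in>V \<times> V. t a b) = (\<Sum>(a, b)\<in>V \<times> V. T a b)"
    using t_le_T by (intro antisym) (auto intro: sum_mono)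
  then have "t u v = T u v"
    using sum_mono_inv[of "case_prod t" "V \<times> V" "case_prod T" "(u, v)"] t_le_T uv finite_V
    by auto
  then have "r u * \<Phi> (reproduce u v X) (reproduce u v Y)
      + (m u - r u) * \<Phi> (mutant_reproduce u v X) (mutant_reproduce u v Y)
      = r u * M + (m u - r u) * M"
    using weight_pos[OF edge(1)] by (simp add: t_def T_def)
  moreover have "(m u - r u) * \<Phi> (mutant_reproduce u v X) (mutant_reproduce u v Y)
      \<le> (m u - r u) * M"
    using le_max R_mutant_reproduce[OF \<open>R X Y\<close> uv] excess_fitness_nonneg[OF uv(1)]
    by (intro mult_left_mono) auto
  ultimately have "r u * M \<le> r u * \<Phi> (reproduce u v X) (reproduce u v Y)"
    by linarith
  then have "M \<le> \<Phi> (reproduce u v X) (reproduce u v Y)"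
    using r_pos[OF uv(1)] by simp
  then show ?thesis
    using le_max[OF R_reproduce[OF \<open>R X Y\<close> uv]] edge by (simp add: reproduce_def)
qed

lemma maximum_reaches_boundary:
  assumes le_max: "\<And>X Y. R X Y \<Longrightarrow> \<Phi> X Y \<le> M"
  shows "R X Y \<Longrightarrow> \<Phi> X Y = M \<Longrightarrow>
    \<exists>X' Y'. R X' Y' \<and> (X' = {} \<or> X' = V) \<and> \<Phi> X' Y' = M"
proof (induction "card (V - X)" arbitrary: X Y rule: less_induct)
  case less
  show ?case
  proof (cases "X = {} \<or> X = V")
    case True
    then show ?thesis
      using less.prems by blast
  next
    case False
    have "X \<subseteq> V"
      using R_subset[OF less.prems(1)] by simp
    then obtain u v where edge: "(u, v) \<in> E" "u \<in> X" "v \<in> V" "v \<notin> X"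
      using exists_edge_leaving False by metis
    have "R (insert v X) (reproduce u v Y)"
      using R_reproduce[OF less.prems(1), of u v] edge \<open>X \<subseteq> V\<close> by (auto simp: reproduce_def)
    moreover have "\<Phi> (insert v X) (reproduce u v Y) = M"
      using maximum_propagates[OF le_max less.prems edge(1,2,4)] .
    moreover have "card (V - insert v X) < card (V - X)"
      using finite_V edge by (intro psubset_card_mono) auto
    ultimately show ?thesis
      using less.hyps by blast
  qed
qed

lemma maximum_principle:
  assumes boundary: "\<And>X Y. R X Y \<Longrightarrow> X = {} \<or> X = V \<Longrightarrow> \<Phi> X Y \<le> 0"
    and "R X Y"
  shows "\<Phi> X Y \<le> 0"
proof -
  have "{(X, Y). R X Y} \<subseteq> Pow V \<times> Pow V"
    using R_subset by auto
  then have fin: "finite {(X, Y). R X Y}"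
    by (rule finite_subset) (simp add: finite_V)
  define M where "M = Max (case_prod \<Phi> ` {(X, Y). R X Y})"
  have le_max: "\<Phi> X Y \<le> M" if "R X Y" for X Y
    unfolding M_def using fin that by (intro Max_ge) auto
  obtain X0 Y0 where "R X0 Y0" "\<Phi> X0 Y0 = M"
    unfolding M_def using fin \<open>R X Y\<close> Max_in[of "case_prod \<Phi> ` {(X, Y). R X Y}"] by fastforce
  then have "M \<le> 0"
    using maximum_reaches_boundary[OF le_max] boundary by metis
  then show ?thesis
    using le_max[OF \<open>R X Y\<close>] by simp
qed

end

lemma fp_mono:
  assumes "X \<subseteq> Y" "Y \<subseteq> V"
  shows "fix_prob X \<le> fix_prob Y"
proof -
  have "fix_prob X - fix_prob Y \<le> 0"
  proof (rule maximum_principle[where R = "\<lambda>X Y. X \<subseteq> Y \<and> Y \<subseteq> V"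
        and \<Phi> = "\<lambda>X Y. fix_prob X - fix_prob Y"])
    show "\<And>X Y. X \<subseteq> Y \<and> Y \<subseteq> V \<Longrightarrow> X \<subseteq> V \<and> Y \<subseteq> V"
      by auto
    show "\<And>X Y u v. X \<subseteq> Y \<and> Y \<subseteq> V \<Longrightarrow> u \<in> V \<Longrightarrow> v \<in> V \<Longrightarrow>
        reproduce u v X \<subseteq> reproduce u v Y \<and> reproduce u v Y \<subseteq> V"
      by (simp add: reproduce_mono reproduce_subset)
    show "\<And>X Y u v. X \<subseteq> Y \<and> Y \<subseteq> V \<Longrightarrow> u \<in> V \<Longrightarrow> v \<in> V \<Longrightarrow>
        mutant_reproduce u v X \<subseteq> mutant_reproduce u v Y \<and> mutant_reproduce u v Y \<subseteq> V"
      by (simp add: mutant_reproduce_mono mutant_reproduce_subset)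
    show "(\<Sum>u\<in>V. m u) * (fix_prob X - fix_prob Y)
        \<le> coupled_step (\<lambda>X Y. fix_prob X - fix_prob Y) X Y" if "X \<subseteq> Y \<and> Y \<subseteq> V" for X Y
    proof -
      have "X \<subseteq> V" "Y \<subseteq> V"
        using that by auto
      then show ?thesis
        by (simp add: coupled_step_diff uniformized_step_fp right_diff_distrib)
    qed
    show "fix_prob X - fix_prob Y \<le> 0" if "X \<subseteq> Y \<and> Y \<subseteq> V" "X = {} \<or> X = V" for X Y
      using that fp_nonneg[of Y] by (auto simp: fp_empty)
  qed (use assms in auto)
  then show ?thesis
    by simp
qed

lemma uniformized_step_submodularity_defect:
  fixes f :: "'a set \<Rightarrow> real"
  defines "D \<equiv> \<lambda>X Y. f (X \<union> Y) + f (X \<inter> Y) - f X - f Y"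
  assumes mono: "\<And>A B. A \<subseteq> B \<Longrightarrow> B \<subseteq> V \<Longrightarrow> f A \<le> f B"
    and "X \<subseteq> V" "Y \<subseteq> V"
  shows "uniformized_step f (X \<union> Y) + uniformized_step f (X \<inter> Y)
      - uniformized_step f X - uniformized_step f Y \<le> coupled_step D X Y"
proof -
  let ?d = "\<lambda>g. f (g (X \<union> Y)) + f (g (X \<inter> Y)) - f (g X) - f (g Y)"
  have term_le: "w u v * (r u * ?d (reproduce u v) + (m u - r u) * ?d (mutant_reproduce u v))
      \<le> w u v * (r u * D (reproduce u v X) (reproduce u v Y)
         + (m u - r u) * D (mutant_reproduce u v X) (mutant_reproduce u v Y))"
    if uv: "u \<in> V" "v \<in> V" for u v
  proof -
    have "mutant_reproduce u v X \<inter> mutant_reproduce u v Y \<subseteq> V"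
      using mutant_reproduce_subset[OF \<open>X \<subseteq> V\<close> uv(2)] by blast
    then have "f (mutant_reproduce u v (X \<inter> Y))
        \<le> f (mutant_reproduce u v X \<inter> mutant_reproduce u v Y)"
      by (rule mono[OF mutant_reproduce_Int_subset])
    then have "?d (mutant_reproduce u v) \<le> D (mutant_reproduce u v X) (mutant_reproduce u v Y)"
      by (simp add: D_def mutant_reproduce_Un)
    moreover have "?d (reproduce u v) = D (reproduce u v X) (reproduce u v Y)"
      by (simp add: D_def reproduce_Un reproduce_Int)
    ultimately show ?thesis
      using weight_nonneg[OF uv] excess_fitness_nonneg[OF uv(1)]
      by (simp add: mult_left_mono)
  qed
  have "uniformized_step f (X \<union> Y) + uniformized_step f (X \<inter> Y)
      - uniformized_step f X - uniformized_step f Y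
      = (\<Sum>u\<in>V. \<Sum>v\<in>V.
          w u v * (r u * ?d (reproduce u v) + (m u - r u) * ?d (mutant_reproduce u v)))"
    unfolding uniformized_step_def
    by (simp only: sum.distrib[symmetric] sum_subtractf[symmetric])
      (intro sum.cong refl, simp add: algebra_simps)
  also have "\<dots> \<le> coupled_step D X Y"
    unfolding coupled_step_def using term_le by (intro sum_mono) auto
  finally show ?thesis .
qed

lemma fp_submodular:
  assumes "S \<subseteq> V" "T \<subseteq> V"
  shows "fix_prob (S \<union> T) + fix_prob (S \<inter> T) \<le> fix_prob S + fix_prob T"
proof -
  define D where
    "D X Y = fix_prob (X \<union> Y) + fix_prob (X \<inter> Y) - fix_prob X - fix_prob Y" for X Y
  have "D S T \<le> 0"
  proof (rule maximum_principle[where R = "\<lambda>X Y. X \<subseteq> V \<and> Y \<subseteq> V" and \<Phi> = D])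
    show "\<And>X Y u v. X \<subseteq> V \<and> Y \<subseteq> V \<Longrightarrow> u \<in> V \<Longrightarrow> v \<in> V \<Longrightarrow>
        reproduce u v X \<subseteq> V \<and> reproduce u v Y \<subseteq> V"
      by (simp add: reproduce_subset)
    show "\<And>X Y u v. X \<subseteq> V \<and> Y \<subseteq> V \<Longrightarrow> u \<in> V \<Longrightarrow> v \<in> V \<Longrightarrow>
        mutant_reproduce u v X \<subseteq> V \<and> mutant_reproduce u v Y \<subseteq> V"
      by (simp add: mutant_reproduce_subset)
    show "(\<Sum>u\<in>V. m u) * D X Y \<le> coupled_step D X Y" if "X \<subseteq> V \<and> Y \<subseteq> V" for X Y
    proof -
      have "X \<subseteq> V" "Y \<subseteq> V" "X \<union> Y \<subseteq> V" "X \<inter> Y \<subseteq> V"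
        using that by auto
      then have "(\<Sum>u\<in>V. m u) * D X Y
          = uniformized_step fix_prob (X \<union> Y) + uniformized_step fix_prob (X \<inter> Y)
            - uniformized_step fix_prob X - uniformized_step fix_prob Y"
        by (simp add: D_def uniformized_step_fp algebra_simps)
      also have "\<dots> \<le> coupled_step D X Y"
        unfolding D_def using \<open>X \<subseteq> V\<close> \<open>Y \<subseteq> V\<close> fp_mono
        by (intro uniformized_step_submodularity_defect)
      finally show ?thesis .
    qed
    show "D X Y \<le> 0" if "X \<subseteq> V \<and> Y \<subseteq> V" "X = {} \<or> X = V" for X Y
      using that by (auto simp: D_def Int_absorb1 Un_absorb2)
  qed (use assms in auto)
  then show ?thesis
    by (simp add: D_def)
qed

end

theorem lemma6:
  fixes V :: "'a set" and E :: "('a \<times> 'a) set" and w :: "'a \<Rightarrow> 'a \<Rightarrow> real"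
    and m r :: "'a \<Rightarrow> real" and S T :: "'a set"
  assumes "fitness_graph V E w m r"
    and "mutant_biased V m r"
    and "S \<subseteq> V" and "T \<subseteq> V"
  shows "fp V w m r S + fp V w m r T \<ge> fp V w m r (S \<union> T) + fp V w m r (S \<inter> T)"
proof -
  interpret mutant_biased_moran_graph V E w m r
    using assms(1,2) by unfold_locales
  show ?thesis
    using fp_submodular[OF assms(3,4)] by simp
qed

end
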